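(* Let $\Gamma$ be a profinite group, let $Z_0$ be a finite $\Gamma$-set with $|Z_0|=n\geq 1$, and let $\pi\colon Z\to Z_0$ be a $\Gamma$-covering of degree $2$, with canonical involution $\sigma$ of $Z$. Let $\delta\colon C(Z/Z_0)\to\Delta(Z)$ be the canonical map, and let $\iota$ denote the nontrivial automorphism of the two-element set $\Delta(Z)$. Then: (1) for sections $\omega,\omega'\in C(Z/Z_0)$ we have $\delta(\omega)=\delta(\omega')$ if and only if $|\omega\cap\omega'|\equiv n \pmod 2$; (2) for every section $\omega$, writing $\underline{\sigma}(\omega)=Z\setminus\omega$ for its complement, we have $\delta(\underline{\sigma}(\omega))=\delta(\omega)$ if $n$ is even and $\delta(\underline{\sigma}(\omega))=\iota(\delta(\omega))$ if $n$ is odd.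
   Context: A (finite) $\Gamma$-set is a finite set with a continuous left action of $\Gamma$ (discrete topology). A $\Gamma$-covering of degree $2$ is a $\Gamma$-equivariant map $\pi\colon Z\to Z_0$ all of whose fibers have exactly $2$ elements; its canonical involution $\sigma\colon Z\to Z$ interchanges the two elements of each fiber. The set of sections $C(Z/Z_0)$ is the set of subsets $\{z_1,\dots,z_n\}\subset Z$ with $\{\pi(z_1),\dots,\pi(z_n)\}=Z_0$ (not necessarily $\Gamma$-stable); $\Gamma$ acts on it. For a $\Gamma$-set $X$ with $|X|=m\geq 2$, let $\Sigma_m(X)$ be the set of $m$-tuples $(x_1,\dots,x_m)$ with $X=\{x_1,\dots,x_m\}$, with the right action of the symmetric group $\mathfrak S_m$; the discriminant $\Delta(X)=\Sigma_m(X)/\mathfrak A_m$ is the two-element $\Gamma$-set of orbits of the alternating group. The map $\delta\colon C(Z/Z_0)\to\Delta(Z)$ sends a section $\{z_1,\dots,z_n\}$ to the $\mathfrak A_{2n}$-orbit of $(z_1,\dots,z_n,\sigma(z_1),\dots,\sigma(z_n))$. *)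

theory Defs
  imports "HOL-Algebra.Group_Action" "HOL-Combinatorics.Permutations"
begin

definition covering2 :: "'a set \<Rightarrow> 'b set \<Rightarrow> ('a \<Rightarrow> 'b) \<Rightarrow> bool" where
  "covering2 Z Z0 \<pi> \<longleftrightarrow> finite Z \<and> \<pi> ` Z \<subseteq> Z0 \<and> (\<forall>y\<in>Z0. card {z\<in>Z. \<pi> z = y} = 2)"

definition cov_inv :: "'a set \<Rightarrow> ('a \<Rightarrow> 'b) \<Rightarrow> 'a \<Rightarrow> 'a" where
  "cov_inv Z \<pi> z = (THE w. w \<in> Z \<and> \<pi> w = \<pi> z \<and> w \<noteq> z)"

definition sections :: "'a set \<Rightarrow> 'b set \<Rightarrow> ('a \<Rightarrow> 'b) \<Rightarrow> 'a set set" where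
  "sections Z Z0 \<pi> = {\<omega>. \<omega> \<subseteq> Z \<and> card \<omega> = card Z0 \<and> \<pi> ` \<omega> = Z0}"

definition tuples :: "'a set \<Rightarrow> 'a list set" where
  "tuples X = {xs. length xs = card X \<and> set xs = X}"

definition alt_orbit :: "'a set \<Rightarrow> 'a list \<Rightarrow> 'a list set" where
  "alt_orbit X xs = {ys. \<exists>p. p permutes {..<card X} \<and> evenperm p \<and> ys = permute_list p xs}"

definition discriminant :: "'a set \<Rightarrow> 'a list set set" where
  "discriminant X = alt_orbit X ` tuples X"

definition delta :: "'a set \<Rightarrow> ('a \<Rightarrow> 'b) \<Rightarrow> 'a set \<Rightarrow> 'a list set" where
  "delta Z \<pi> \<omega> = (let zs = (SOME zs. distinct zs \<and> set zs = \<omega>)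
                    in alt_orbit Z (zs @ map (cov_inv Z \<pi>) zs))"

definition disc_swap :: "'a set \<Rightarrow> 'a list set \<Rightarrow> 'a list set" where
  "disc_swap Z d = (THE d'. d' \<in> discriminant Z \<and> d' \<noteq> d)"

end

theory Submission
  imports Defs
begin

text \<open>Enumerate a section \<omega> as z1, ..., zn; then (z1, ..., zn, \<sigma> z1, ..., \<sigma> zn) enumerates Z.
  For a second section \<omega>', replacing each zi \<notin> \<omega>' by \<sigma> zi is a transposition of the positions
  i and n + i, and the result is the tuple of \<omega>' up to reordering both halves by the same
  permutation, which is even. So the tuples of \<omega> and \<omega>' differ by a permutation of sign
  (-1)^|\<omega> - \<omega>'| = (-1)^(n - |\<omega> \<inter> \<omega>'|), and they lie in the same orbit of the alternating group
  iff this sign is 1. The complement Z - \<omega> = \<sigma>(\<omega>) is again a section and is disjoint from \<omega>,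
  and \<Delta>(Z) has exactly two elements.\<close>

lemma permutation_if_permutes_lessThan: "p permutes {..<(m::nat)} \<Longrightarrow> permutation p"
  by (rule permutes_imp_permutation[OF finite_lessThan])

lemma permute_list_distinct_eqD:
  assumes "distinct xs" "f permutes {..<length xs}" "g permutes {..<length xs}"
    and "permute_list f xs = permute_list g xs"
  shows "f = g"
proof
  fix i show "f i = g i"
  proof (cases "i < length xs")
    case True
    have "xs ! f i = xs ! g i"
      using arg_cong[OF assms(4), of "\<lambda>l. l ! i"] permute_list_nth[OF assms(2) True]
        permute_list_nth[OF assms(3) True] by simp
    moreover have "f i < length xs" "g i < length xs"
      using permutes_in_image[OF assms(2)] permutes_in_image[OF assms(3)] True by auto
    ultimately show ?thesis using assms(1) nth_eq_iff_index_eq by blast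
  next
    case False
    then show ?thesis using permutes_not_in[OF assms(2)] permutes_not_in[OF assms(3)] by auto
  qed
qed

lemma alt_orbit_permute_list_eq_iff:
  assumes xs: "distinct xs" "length xs = card X"
    and p: "p permutes {..<length xs}" and q: "q permutes {..<length xs}"
  shows "alt_orbit X (permute_list p xs) = alt_orbit X (permute_list q xs) \<longleftrightarrow>
    (evenperm p \<longleftrightarrow> evenperm q)"
proof
  assume eq: "alt_orbit X (permute_list p xs) = alt_orbit X (permute_list q xs)"
  have "permute_list p xs \<in> alt_orbit X (permute_list p xs)"
    unfolding alt_orbit_def by (rule CollectI, rule exI[of _ id]) simp
  then obtain r where r: "r permutes {..<length xs}" "evenperm r"
     "permute_list p xs = permute_list r (permute_list q xs)"
    using eq xs(2) unfolding alt_orbit_def by auto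
  then have "permute_list p xs = permute_list (q \<circ> r) xs" by (simp add: permute_list_compose)
  then have "p = q \<circ> r"
    using permute_list_distinct_eqD[OF xs(1) p permutes_compose[OF r(1) q]] by simp
  then show "evenperm p \<longleftrightarrow> evenperm q"
    using evenperm_comp[OF permutation_if_permutes_lessThan[OF q]
        permutation_if_permutes_lessThan[OF r(1)]] r(2)
    by simp
next
  have sub: "alt_orbit X (permute_list p xs) \<subseteq> alt_orbit X (permute_list q xs)"
    if p: "p permutes {..<length xs}" and q: "q permutes {..<length xs}"
      and ev: "evenperm p \<longleftrightarrow> evenperm q" for p q
  proof
    fix ys assume "ys \<in> alt_orbit X (permute_list p xs)"
    then obtain r where r: "r permutes {..<length xs}" "evenperm r"
       "ys = permute_list r (permute_list p xs)"
      using xs(2) unfolding alt_orbit_def by auto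
    define s where "s = Hilbert_Choice.inv q \<circ> p \<circ> r"
    have s: "s permutes {..<length xs}"
      unfolding s_def by (intro permutes_compose permutes_inv r p q)
    have "evenperm s"
      unfolding s_def using ev r(2)
        evenperm_comp[OF permutation_if_permutes_lessThan[OF permutes_compose[OF p permutes_inv[OF q]]]
          permutation_if_permutes_lessThan[OF r(1)]]
        evenperm_comp[OF permutation_if_permutes_lessThan[OF permutes_inv[OF q]]
          permutation_if_permutes_lessThan[OF p]]
        evenperm_inv[OF permutation_if_permutes_lessThan[OF q]]
      by auto
    have "q \<circ> s = p \<circ> r"
      unfolding s_def using permutes_inv_o(1)[OF q] by (simp add: o_assoc)
    then have "ys = permute_list s (permute_list q xs)"
      using r(3) by (simp add: permute_list_compose[symmetric] s r(1))
    then show "ys \<in> alt_orbit X (permute_list q xs)"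
      unfolding alt_orbit_def using s \<open>evenperm s\<close> xs(2) by auto
  qed
  assume "evenperm p \<longleftrightarrow> evenperm q"
  then show "alt_orbit X (permute_list p xs) = alt_orbit X (permute_list q xs)"
    using sub[OF p q] sub[OF q p] by blast
qed

lemma discriminant_obtain_permute_list:
  assumes xs: "distinct xs" "set xs = X" and d: "d \<in> discriminant X"
  obtains r where "r permutes {..<length xs}" "d = alt_orbit X (permute_list r xs)"
proof -
  obtain ys where ys: "length ys = card X" "set ys = X" "d = alt_orbit X ys"
    using d unfolding discriminant_def tuples_def by auto
  have "distinct ys"
    using ys card_distinct[of ys] by simp
  then have "mset ys = mset xs"
    using set_eq_iff_mset_eq_distinct xs ys(2) by blast
  then obtain r where "r permutes {..<length xs}" "permute_list r xs = ys"
    by (rule mset_eq_permutation)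
  with ys(3) that show ?thesis by blast
qed

lemma disc_swap_eqI:
  assumes "finite X" and d: "d \<in> discriminant X" and d': "d' \<in> discriminant X" "d' \<noteq> d"
  shows "disc_swap X d = d'"
  unfolding disc_swap_def
proof (rule the_equality)
  show "d' \<in> discriminant X \<and> d' \<noteq> d" using d' by blast
  fix d'' assume d'': "d'' \<in> discriminant X \<and> d'' \<noteq> d"
  obtain xs where xs: "distinct xs" "set xs = X"
    using finite_distinct_list[OF \<open>finite X\<close>] by blast
  have len: "length xs = card X" using distinct_card[OF xs(1)] xs(2) by simp
  obtain r where r: "r permutes {..<length xs}" "d = alt_orbit X (permute_list r xs)"
    using discriminant_obtain_permute_list[OF xs d] .
  obtain r' where r': "r' permutes {..<length xs}" "d' = alt_orbit X (permute_list r' xs)"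
    using discriminant_obtain_permute_list[OF xs d'(1)] .
  obtain r'' where r'': "r'' permutes {..<length xs}" "d'' = alt_orbit X (permute_list r'' xs)"
    using discriminant_obtain_permute_list[OF xs conjunct1[OF d'']] .
  show "d'' = d'"
    using alt_orbit_permute_list_eq_iff[OF xs(1) len] r r' r'' d'(2) d'' by metis
qed

definition half_swap :: "nat \<Rightarrow> nat set \<Rightarrow> nat \<Rightarrow> nat" where
  "half_swap n S i =
    (if i < n \<and> i \<in> S then i + n else if n \<le> i \<and> i < 2*n \<and> i - n \<in> S then i - n else i)"

lemma half_swap_permutes_evenperm:
  assumes "finite S" "S \<subseteq> {..<n}"
  shows "half_swap n S permutes {..<2*n} \<and> (evenperm (half_swap n S) \<longleftrightarrow> even (card S))"
  using assms
proof (induction S rule: finite_induct)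
  case empty
  have "half_swap n {} = (\<lambda>x. x)" by (auto simp: half_swap_def)
  then show ?case using permutes_id[of "{..<2*n}"] by (simp add: id_def)
next
  case (insert a S)
  have a: "a < n" using insert by auto
  have eq: "half_swap n (insert a S) = transpose a (a+n) \<circ> half_swap n S"
  proof
    fix i show "half_swap n (insert a S) i = (transpose a (a+n) \<circ> half_swap n S) i"
      using insert(2,4) a by (auto simp: half_swap_def transpose_def)
  qed
  have IH: "half_swap n S permutes {..<2*n}" "evenperm (half_swap n S) \<longleftrightarrow> even (card S)"
    using insert by auto
  have t: "transpose a (a+n) permutes {..<2*n}" using a by (intro permutes_swap_id) auto
  have "evenperm (half_swap n (insert a S)) \<longleftrightarrow> \<not> evenperm (half_swap n S)"
    unfolding eq using evenperm_comp[OF permutation_if_permutes_lessThan[OF t]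
      permutation_if_permutes_lessThan[OF IH(1)]] a
    by (simp add: evenperm_swap)
  moreover have "card (insert a S) = Suc (card S)" using insert(1,2) by simp
  ultimately show ?case using IH eq permutes_compose[OF IH(1) t] by (simp only:) simp
qed

lemma permute_list_half_swap:
  assumes "length xs = n" "length ys = n"
  shows "permute_list (half_swap n S) (xs @ ys) =
    map (\<lambda>i. if i \<in> S then ys ! i else xs ! i) [0..<n] @ map (\<lambda>i. if i \<in> S then xs ! i else ys ! i) [0..<n]"
proof (rule nth_equalityI)
  fix i assume "i < length (permute_list (half_swap n S) (xs @ ys))"
  then have i: "i < 2*n" using assms by simp
  have lhs: "permute_list (half_swap n S) (xs @ ys) ! i = (xs @ ys) ! half_swap n S i"
    using i assms by (simp add: permute_list_def)
  show "permute_list (half_swap n S) (xs @ ys) ! i =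
    (map (\<lambda>i. if i \<in> S then ys ! i else xs ! i) [0..<n] @ map (\<lambda>i. if i \<in> S then xs ! i else ys ! i) [0..<n]) ! i"
  proof (cases "i < n")
    case False
    then have "i - n < n" using i by simp
    with False show ?thesis using lhs assms i by (simp add: half_swap_def nth_append)
  qed (use lhs assms in \<open>simp add: half_swap_def nth_append\<close>)
qed (use assms in simp)

definition double_perm :: "nat \<Rightarrow> (nat \<Rightarrow> nat) \<Rightarrow> nat \<Rightarrow> nat" where
  "double_perm n t i = (if i < n then t i else if i < 2*n then t (i - n) + n else i)"

lemma double_perm_permutes_evenperm:
  assumes "t permutes {..<n}"
  shows "double_perm n t permutes {..<2*n} \<and> evenperm (double_perm n t)"
  using assms finite_lessThan
proof (induction rule: permutes_induct)
  case id
  have "double_perm n id = (\<lambda>x. x)" by (auto simp: double_perm_def)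
  then show ?case using permutes_id[of "{..<2*n}"] by (simp add: id_def)
next
  case (swap a b p)
  have ab: "a < n" "b < n" using swap by auto
  have p: "p permutes {..<n}" using swap by blast
  have p_in: "\<And>i. i < n \<Longrightarrow> p i < n" using permutes_in_image[OF p] by auto
  let ?\<tau> = "transpose a b \<circ> transpose (a+n) (b+n)"
  have eq: "double_perm n (transpose a b \<circ> p) = ?\<tau> \<circ> double_perm n p"
  proof
    fix i show "double_perm n (transpose a b \<circ> p) i = (?\<tau> \<circ> double_perm n p) i"
      using ab p_in[of i] p_in[of "i - n"] by (auto simp: double_perm_def transpose_def)
  qed
  have t: "transpose a b permutes {..<2*n}" "transpose (a+n) (b+n) permutes {..<2*n}"
    using ab by (auto intro!: permutes_swap_id)
  have \<tau>: "?\<tau> permutes {..<2*n}"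
    by (rule permutes_compose[OF t(2) t(1)])
  have "evenperm ?\<tau>"
    using evenperm_comp[OF permutation_if_permutes_lessThan[OF t(1)]
        permutation_if_permutes_lessThan[OF t(2)]] swap(3)
    by (simp add: evenperm_swap)
  moreover have IH: "double_perm n p permutes {..<2*n}" "evenperm (double_perm n p)"
    using swap by blast+
  ultimately show ?case
    unfolding eq using evenperm_comp[OF permutation_if_permutes_lessThan[OF \<tau>]
        permutation_if_permutes_lessThan[OF IH(1)]] permutes_compose[OF IH(1) \<tau>]
    by (simp only:)
qed

lemma permute_list_double_perm:
  assumes t: "t permutes {..<n}" and "length xs = n" "length ys = n"
  shows "permute_list (double_perm n t) (xs @ ys) = permute_list t xs @ permute_list t ys"
proof (rule nth_equalityI)
  fix i assume "i < length (permute_list (double_perm n t) (xs @ ys))"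
  then have i: "i < 2*n" using assms by simp
  have lhs: "permute_list (double_perm n t) (xs @ ys) ! i = (xs @ ys) ! double_perm n t i"
    using i assms by (simp add: permute_list_def)
  have t_in: "t j < n" if "j < n" for j
    using permutes_in_image[OF t] that by simp
  have nth_t: "permute_list t zs ! j = zs ! t j" if "length zs = n" "j < n" for zs :: "'a list" and j
    using permute_list_nth[of t zs j] t that by simp
  show "permute_list (double_perm n t) (xs @ ys) ! i = (permute_list t xs @ permute_list t ys) ! i"
  proof (cases "i < n")
    case False
    then have "i - n < n" using i by simp
    with False show ?thesis using lhs assms i t_in nth_t by (simp add: double_perm_def nth_append)
  qed (use lhs assms t_in nth_t in \<open>simp add: double_perm_def nth_append\<close>)
qed (use assms in simp)

definition set_enum :: "'a set \<Rightarrow> 'a list" where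
  "set_enum \<omega> = (SOME zs. distinct zs \<and> set zs = \<omega>)"

definition section_tuple :: "'a set \<Rightarrow> ('a \<Rightarrow> 'b) \<Rightarrow> 'a set \<Rightarrow> 'a list" where
  "section_tuple Z \<pi> \<omega> = set_enum \<omega> @ map (cov_inv Z \<pi>) (set_enum \<omega>)"

lemma delta_eq_alt_orbit: "delta Z \<pi> \<omega> = alt_orbit Z (section_tuple Z \<pi> \<omega>)"
  unfolding delta_def section_tuple_def set_enum_def Let_def by simp

lemma set_enum:
  assumes "finite \<omega>"
  shows "distinct (set_enum \<omega>)" "set (set_enum \<omega>) = \<omega>"
proof -
  have "\<exists>zs. distinct zs \<and> set zs = \<omega>" using finite_distinct_list[OF assms] by blast
  then have "distinct (set_enum \<omega>) \<and> set (set_enum \<omega>) = \<omega>"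
    unfolding set_enum_def by (rule someI_ex)
  then show "distinct (set_enum \<omega>)" "set (set_enum \<omega>) = \<omega>" by auto
qed

context
  fixes Z :: "'a set" and Z0 :: "'b set" and \<pi> :: "'a \<Rightarrow> 'b"
  assumes cov: "covering2 Z Z0 \<pi>"
begin

lemma covering2_finite: "finite Z"
  using cov unfolding covering2_def by auto

lemma cov_inv_fibre:
  assumes "z \<in> Z"
  shows "{x\<in>Z. \<pi> x = \<pi> z} = {z, cov_inv Z \<pi> z}" "cov_inv Z \<pi> z \<noteq> z"
proof -
  have "\<pi> z \<in> Z0" using cov assms unfolding covering2_def by auto
  then have "card {x\<in>Z. \<pi> x = \<pi> z} = 2" using cov unfolding covering2_def by auto
  then obtain a b where ab: "{x\<in>Z. \<pi> x = \<pi> z} = {a, b}" "a \<noteq> b"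
    unfolding card_2_iff by blast
  moreover have "z \<in> {a, b}" using assms ab(1) by blast
  ultimately obtain w where w: "{x\<in>Z. \<pi> x = \<pi> z} = {z, w}" "w \<noteq> z"
    by (auto simp: insert_commute)
  have "cov_inv Z \<pi> z = w"
    unfolding cov_inv_def by (rule the_equality) (use w in blast)+
  with w show "{x\<in>Z. \<pi> x = \<pi> z} = {z, cov_inv Z \<pi> z}" "cov_inv Z \<pi> z \<noteq> z" by auto
qed

lemma cov_inv_mem: "z \<in> Z \<Longrightarrow> cov_inv Z \<pi> z \<in> Z"
  and \<pi>_cov_inv: "z \<in> Z \<Longrightarrow> \<pi> (cov_inv Z \<pi> z) = \<pi> z"
  using cov_inv_fibre(1) by blast+

lemma fibre_cases: "z \<in> Z \<Longrightarrow> w \<in> Z \<Longrightarrow> \<pi> w = \<pi> z \<Longrightarrow> w = z \<or> w = cov_inv Z \<pi> z"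
  using cov_inv_fibre(1) by blast

lemma cov_inv_cov_inv:
  assumes "z \<in> Z"
  shows "cov_inv Z \<pi> (cov_inv Z \<pi> z) = z"
proof -
  let ?\<sigma> = "cov_inv Z \<pi>"
  have "?\<sigma> (?\<sigma> z) \<in> Z" "\<pi> (?\<sigma> (?\<sigma> z)) = \<pi> z" "?\<sigma> (?\<sigma> z) \<noteq> ?\<sigma> z"
    using assms cov_inv_mem \<pi>_cov_inv cov_inv_fibre(2) by auto
  then show ?thesis using fibre_cases[OF assms] by blast
qed

lemma inj_on_cov_inv: "inj_on (cov_inv Z \<pi>) Z"
  by (rule inj_onI) (metis cov_inv_cov_inv)

context
  fixes \<omega> assumes \<omega>: "\<omega> \<in> sections Z Z0 \<pi>"
begin

lemma section_subset: "\<omega> \<subseteq> Z" and card_section: "card \<omega> = card Z0"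
  and image_section: "\<pi> ` \<omega> = Z0"
  using \<omega> unfolding sections_def by auto

lemma finite_section: "finite \<omega>"
  using section_subset covering2_finite finite_subset by blast

lemma inj_on_section: "inj_on \<pi> \<omega>"
  using card_section image_section eq_card_imp_inj_on[OF finite_section, of \<pi>] by simp

lemma cov_inv_notin_section: "z \<in> \<omega> \<Longrightarrow> cov_inv Z \<pi> z \<notin> \<omega>"
  using inj_on_section section_subset \<pi>_cov_inv cov_inv_fibre(2) unfolding inj_on_def by blast

lemma section_Un_cov_inv_image: "\<omega> \<union> cov_inv Z \<pi> ` \<omega> = Z"
proof
  show "\<omega> \<union> cov_inv Z \<pi> ` \<omega> \<subseteq> Z" using section_subset cov_inv_mem by auto
  show "Z \<subseteq> \<omega> \<union> cov_inv Z \<pi> ` \<omega>"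
  proof
    fix z assume z: "z \<in> Z"
    then have "\<pi> z \<in> \<pi> ` \<omega>" using cov image_section unfolding covering2_def by auto
    then obtain w where "w \<in> \<omega>" "\<pi> w = \<pi> z" by auto
    with fibre_cases[of w z] section_subset z show "z \<in> \<omega> \<union> cov_inv Z \<pi> ` \<omega>" by auto
  qed
qed

lemma Diff_section: "Z - \<omega> = cov_inv Z \<pi> ` \<omega>"
  using section_Un_cov_inv_image cov_inv_notin_section by auto

lemma length_set_enum: "length (set_enum \<omega>) = card Z0"
  using distinct_card[OF set_enum(1)[OF finite_section]] set_enum(2)[OF finite_section]
    card_section by simp

lemma section_tuple:
  shows "distinct (section_tuple Z \<pi> \<omega>)" "set (section_tuple Z \<pi> \<omega>) = Z"
    "length (section_tuple Z \<pi> \<omega>) = 2 * card Z0"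
  using set_enum[OF finite_section] length_set_enum section_Un_cov_inv_image
    cov_inv_notin_section inj_on_subset[OF inj_on_cov_inv section_subset]
  by (auto simp: section_tuple_def distinct_map)

lemma card_covering2: "card Z = 2 * card Z0"
  using distinct_card[OF section_tuple(1)] section_tuple(2,3) by simp

lemma delta_in_discriminant: "delta Z \<pi> \<omega> \<in> discriminant Z"
  unfolding discriminant_def tuples_def delta_eq_alt_orbit
  using section_tuple card_covering2 by auto

lemma Diff_section_in_sections: "Z - \<omega> \<in> sections Z Z0 \<pi>"
proof -
  have "\<pi> ` (Z - \<omega>) = \<pi> ` \<omega>"
    unfolding Diff_section image_image using section_subset \<pi>_cov_inv by (intro image_cong) auto
  moreover have "card (Z - \<omega>) = card \<omega>"
    unfolding Diff_section using card_image inj_on_subset[OF inj_on_cov_inv section_subset] by blast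
  ultimately show ?thesis
    unfolding sections_def using card_section image_section by auto
qed

end

lemma section_switch:
  assumes \<omega>: "\<omega> \<in> sections Z Z0 \<pi>" and \<omega>': "\<omega>' \<in> sections Z Z0 \<pi>"
  defines "f \<equiv> \<lambda>z. if z \<in> \<omega>' then z else cov_inv Z \<pi> z"
  shows "inj_on f \<omega>" "f ` \<omega> = \<omega>'"
proof -
  have \<pi>_f: "\<pi> (f z) = \<pi> z" if "z \<in> \<omega>" for z
    using that section_subset[OF \<omega>] \<pi>_cov_inv unfolding f_def by auto
  show inj: "inj_on f \<omega>"
  proof (rule inj_onI)
    fix x y assume "x \<in> \<omega>" "y \<in> \<omega>" "f x = f y"
    with \<pi>_f show "x = y" using inj_on_section[OF \<omega>] by (metis inj_on_def)
  qed
  have "f z \<in> \<omega>'" if z: "z \<in> \<omega>" for z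
  proof (cases "z \<in> \<omega>'")
    case False
    have "\<pi> z \<in> \<pi> ` \<omega>'" using image_section[OF \<omega>] image_section[OF \<omega>'] z by auto
    then obtain w where "w \<in> \<omega>'" "\<pi> w = \<pi> z" by auto
    with fibre_cases[of z w] section_subset[OF \<omega>] section_subset[OF \<omega>'] z False
    show ?thesis unfolding f_def by auto
  qed (simp add: f_def)
  then have "f ` \<omega> \<subseteq> \<omega>'" by blast
  moreover have "card (f ` \<omega>) = card \<omega>'"
    using card_image[OF inj] card_section[OF \<omega>] card_section[OF \<omega>'] by simp
  ultimately show "f ` \<omega> = \<omega>'"
    using card_subset_eq[OF finite_section[OF \<omega>']] by blast
qed

lemma section_tuple_permute:
  assumes \<omega>: "\<omega> \<in> sections Z Z0 \<pi>" and \<omega>': "\<omega>' \<in> sections Z Z0 \<pi>"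
  obtains q where "q permutes {..<2 * card Z0}"
    "section_tuple Z \<pi> \<omega>' = permute_list q (section_tuple Z \<pi> \<omega>)"
    "evenperm q \<longleftrightarrow> even (card (\<omega> - \<omega>'))"
proof -
  let ?\<sigma> = "cov_inv Z \<pi>"
  define n where "n = card Z0"
  define zs where "zs = set_enum \<omega>"
  define f where "f = (\<lambda>z. if z \<in> \<omega>' then z else ?\<sigma> z)"
  define ys where "ys = map f zs"
  define S where "S = {i. i < n \<and> zs ! i \<notin> \<omega>'}"
  have zs: "distinct zs" "set zs = \<omega>" "length zs = n"
    using set_enum[OF finite_section[OF \<omega>]] length_set_enum[OF \<omega>]
    unfolding zs_def n_def by auto
  have zs_Z: "zs ! i \<in> Z" if "i < n" for i
    using zs section_subset[OF \<omega>] that by auto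
  have ys: "distinct ys" "set ys = \<omega>'" "length ys = n"
    using section_switch[OF \<omega> \<omega>'] zs unfolding ys_def f_def by (auto simp: distinct_map)
  have S: "S \<subseteq> {..<n}" "finite S" unfolding S_def by auto
  have swap: "permute_list (half_swap n S) (section_tuple Z \<pi> \<omega>) = ys @ map ?\<sigma> ys"
    unfolding section_tuple_def zs_def[symmetric]
      permute_list_half_swap[OF zs(3) length_map[of ?\<sigma> zs, unfolded zs(3)]]
    using zs(3) zs_Z cov_inv_cov_inv by (auto intro!: nth_equalityI simp: ys_def f_def S_def)
  obtain t where t: "t permutes {..<n}" "permute_list t ys = set_enum \<omega>'"
    using mset_eq_permutation[of "set_enum \<omega>'" ys] ys set_enum[OF finite_section[OF \<omega>']]
    by (metis set_eq_iff_mset_eq_distinct)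
  have reorder: "permute_list (double_perm n t) (ys @ map ?\<sigma> ys) = section_tuple Z \<pi> \<omega>'"
    using permute_list_double_perm[OF t(1) ys(3)] permute_list_map[of t ys ?\<sigma>] t ys(3)
    by (simp add: section_tuple_def)
  have hs: "half_swap n S permutes {..<2*n}" "evenperm (half_swap n S) \<longleftrightarrow> even (card S)"
    using half_swap_permutes_evenperm[OF S(2,1)] by auto
  have dp: "double_perm n t permutes {..<2*n}" "evenperm (double_perm n t)"
    using double_perm_permutes_evenperm[OF t(1)] by auto
  have "card S = length (filter (\<lambda>z. z \<notin> \<omega>') zs)"
    unfolding length_filter_conv_card S_def zs(3) ..
  also have "\<dots> = card (\<omega> - \<omega>')"
    using distinct_card[of "filter (\<lambda>z. z \<notin> \<omega>') zs"] zs by (simp add: set_diff_eq)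
  finally have card_S: "card S = card (\<omega> - \<omega>')" .
  show ?thesis
  proof
    show "half_swap n S \<circ> double_perm n t permutes {..<2 * card Z0}"
      using permutes_compose[OF dp(1) hs(1)] by (simp add: n_def)
    show "section_tuple Z \<pi> \<omega>' =
        permute_list (half_swap n S \<circ> double_perm n t) (section_tuple Z \<pi> \<omega>)"
      using swap reorder
        permute_list_compose[of "double_perm n t" "section_tuple Z \<pi> \<omega>" "half_swap n S"]
        dp(1) section_tuple(3)[OF \<omega>] by (simp add: n_def)
    show "evenperm (half_swap n S \<circ> double_perm n t) \<longleftrightarrow> even (card (\<omega> - \<omega>'))"
      using evenperm_comp[OF permutation_if_permutes_lessThan[OF hs(1)]
        permutation_if_permutes_lessThan[OF dp(1)]] hs(2) dp(2) card_S by simp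
  qed
qed

lemma delta_eq_iff_even_card_Diff:
  assumes \<omega>: "\<omega> \<in> sections Z Z0 \<pi>" and \<omega>': "\<omega>' \<in> sections Z Z0 \<pi>"
  shows "delta Z \<pi> \<omega> = delta Z \<pi> \<omega>' \<longleftrightarrow> even (card (\<omega> - \<omega>'))"
proof -
  obtain q where q: "q permutes {..<2 * card Z0}"
    "section_tuple Z \<pi> \<omega>' = permute_list q (section_tuple Z \<pi> \<omega>)"
    "evenperm q \<longleftrightarrow> even (card (\<omega> - \<omega>'))"
    using section_tuple_permute[OF \<omega> \<omega>'] .
  have "delta Z \<pi> \<omega> = alt_orbit Z (permute_list id (section_tuple Z \<pi> \<omega>))"
    "delta Z \<pi> \<omega>' = alt_orbit Z (permute_list q (section_tuple Z \<pi> \<omega>))"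
    using q(2) by (simp_all add: delta_eq_alt_orbit)
  then show ?thesis
    using alt_orbit_permute_list_eq_iff[of "section_tuple Z \<pi> \<omega>" Z id q] section_tuple[OF \<omega>]
      card_covering2[OF \<omega>] q(1,3) permutes_id by simp
qed

end

theorem proposition2p1:
  fixes G :: "('g, 'm) monoid_scheme" (structure)
    and \<phi> :: "'g \<Rightarrow> 'a \<Rightarrow> 'a" and \<psi> :: "'g \<Rightarrow> 'b \<Rightarrow> 'b"
    and Z :: "'a set" and Z0 :: "'b set" and \<pi> :: "'a \<Rightarrow> 'b" and n :: nat
  assumes "group G"
    and "group_action G Z \<phi>" and "group_action G Z0 \<psi>"
    and "finite Z0" and "card Z0 = n" and "n \<ge> 1"
    and "covering2 Z Z0 \<pi>"
    and "\<forall>g\<in>carrier G. \<forall>z\<in>Z. \<pi> (\<phi> g z) = \<psi> g (\<pi> z)"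
  shows "(\<forall>\<omega>\<in>sections Z Z0 \<pi>. \<forall>\<omega>'\<in>sections Z Z0 \<pi>.
            delta Z \<pi> \<omega> = delta Z \<pi> \<omega>' \<longleftrightarrow> card (\<omega> \<inter> \<omega>') mod 2 = n mod 2)
       \<and> (\<forall>\<omega>\<in>sections Z Z0 \<pi>.
            delta Z \<pi> (Z - \<omega>) = (if even n then delta Z \<pi> \<omega> else disc_swap Z (delta Z \<pi> \<omega>)))"
proof -
  note cov = \<open>covering2 Z Z0 \<pi>\<close>
  have parity: "delta Z \<pi> \<omega> = delta Z \<pi> \<omega>' \<longleftrightarrow> card (\<omega> \<inter> \<omega>') mod 2 = n mod 2"
    if \<omega>: "\<omega> \<in> sections Z Z0 \<pi>" and \<omega>': "\<omega>' \<in> sections Z Z0 \<pi>" for \<omega> \<omega>'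
  proof -
    have "card (\<omega> - \<omega>') = n - card (\<omega> \<inter> \<omega>')" "card (\<omega> \<inter> \<omega>') \<le> n"
      using card_Diff_subset_Int[of \<omega> \<omega>'] card_mono[of \<omega> "\<omega> \<inter> \<omega>'"]
        finite_section[OF cov \<omega>] card_section[OF cov \<omega>] \<open>card Z0 = n\<close> by auto
    then show ?thesis
      using delta_eq_iff_even_card_Diff[OF cov \<omega> \<omega>'] by presburger
  qed
  have complement:
    "delta Z \<pi> (Z - \<omega>) = (if even n then delta Z \<pi> \<omega> else disc_swap Z (delta Z \<pi> \<omega>))"
    if \<omega>: "\<omega> \<in> sections Z Z0 \<pi>" for \<omega>
  proof -
    have \<omega>c: "Z - \<omega> \<in> sections Z Z0 \<pi>"
      using Diff_section_in_sections[OF cov \<omega>] .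
    have "Z - \<omega> - \<omega> = Z - \<omega>" by blast
    then have "delta Z \<pi> (Z - \<omega>) = delta Z \<pi> \<omega> \<longleftrightarrow> even n"
      using delta_eq_iff_even_card_Diff[OF cov \<omega>c \<omega>] card_section[OF cov \<omega>c] \<open>card Z0 = n\<close>
      by simp
    then show ?thesis
      using disc_swap_eqI[OF covering2_finite[OF cov] delta_in_discriminant[OF cov \<omega>]
          delta_in_discriminant[OF cov \<omega>c]] by auto
  qed
  show ?thesis
    using parity complement by blast
qed

end
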